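(* Let $(F_n)_{n\ge1}$ be the Fibonacci sequence ($F_1=F_2=1$, $F_{n+2}=F_{n+1}+F_n$). For a positive integer $n$ let $z(n)$ be the smallest positive integer $k$ such that $n\mid F_k$, and let $\ell(n):=\operatorname{lcm}(n,z(n))$. Let $\varphi$ denote Euler's totient function. Then there is an absolute constant $C>0$ such that for all real $y>0$, $$\sum_{q>y,\ q \text{ prime}} \frac{1}{\varphi(\ell(q))}\le \frac{C}{y^{1/4}}.$$ *)

theory Defs
  imports "HOL-Analysis.Analysis" "HOL-Number_Theory.Number_Theory"
begin

text \<open>Rank of apparition: smallest positive k with n dividing F_k (fib from HOL-Number_Theory.Fib,
  fib 0 = 0, fib 1 = fib 2 = 1).\<close>
definition zfib :: "nat \<Rightarrow> nat" where
  "zfib n = (LEAST k. 0 < k \<and> n dvd fib k)"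

definition ellfib :: "nat \<Rightarrow> nat" where
  "ellfib n = lcm n (zfib n)"

end

theory Submission
  imports Defs
begin

text \<open>
  For a prime q not in {2, 5}, reducing the binomial expansion of 2^q F(q) modulo q gives
  F(q) = 5^((q-1)/2) (mod q), so F(q)^2 = 1 (mod q) and by Cassini's identity q divides
  F(q-1) F(q+1). Hence z(q) divides q - 1 or q + 1, is coprime to q, and
  phi(l(q)) = (q - 1) phi(z(q)). Together with phi(m) >= m^(2/3) / 4 this yields
  q^(1/4) / phi(l(q)) <= 8 (q^(-13/12) + z(q)^(-13/6)). Both terms are summable over the
  primes: the second because the primes q with z(q) = m divide F(m) <= 2^m, so there are at
  most m of them. Since q^(1/4) > y^(1/4) on the tail q > y, the tail sum is at most
  y^(-1/4) times the convergent series of q^(1/4) / phi(l(q)) over all primes.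
\<close>

lemma fib_binomial_expansion:
  "2 ^ n * fib n = 2 * (\<Sum>k\<le>n. if odd k then (n choose k) * 5 ^ (k div 2) else 0)"
proof -
  define s :: real where "s = sqrt 5"
  have s_pos: "s > 0" unfolding s_def by simp
  have s_pow: "s ^ k = (if odd k then 5 ^ (k div 2) * s else 5 ^ (k div 2))" for k
  proof -
    have "s ^ k = (s ^ 2) ^ (k div 2) * s ^ (k mod 2)"
      by (simp only: power_mult[symmetric] power_add[symmetric] mult_div_mod_eq)
    then show ?thesis by (auto simp: s_def odd_iff_mod_2_eq_one)
  qed
  have "(1 + s) ^ n - (1 - s) ^ n = (\<Sum>k\<le>n. real (n choose k) * (s ^ k - (- s) ^ k))"
    using binomial_ring[of s 1 n] binomial_ring[of "- s" 1 n]
    by (simp add: sum_subtractf right_diff_distrib add.commute)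
  also have "\<dots> = 2 * s * real (\<Sum>k\<le>n. if odd k then (n choose k) * 5 ^ (k div 2) else 0)"
    unfolding of_nat_sum sum_distrib_left
    by (intro sum.cong refl) (auto simp: s_pow power_minus_odd)
  finally have "real (2 ^ n * fib n) = real (2 * (\<Sum>k\<le>n. if odd k then (n choose k) * 5 ^ (k div 2) else 0))"
    using fib_closed_form[of n] s_pos unfolding s_def[symmetric]
    by (simp add: power_divide field_simps)
  then show ?thesis by (simp only: of_nat_eq_iff)
qed

lemma cong_fib_prime:
  assumes "prime q" "q \<noteq> 2"
  shows "[fib q = 5 ^ (q div 2)] (mod q)"
proof -
  have "odd q"
    using prime_odd_nat[OF assms(1)] prime_ge_2_nat[OF assms(1)] assms(2) by simp
  define c where "c k = (if odd k then (q choose k) * 5 ^ (k div 2) else 0)" for k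
  have "q dvd (\<Sum>k<q. c k)"
    using dvd_choose_prime[of _ q] \<open>prime q\<close> by (intro dvd_sum) (auto simp: c_def odd_pos)
  moreover have "(\<Sum>k\<le>q. c k) = (\<Sum>k<q. c k) + 5 ^ (q div 2)"
    using \<open>odd q\<close> by (simp add: lessThan_Suc_atMost[symmetric] c_def)
  ultimately have sum_cong: "[(\<Sum>k\<le>q. c k) = 5 ^ (q div 2)] (mod q)"
    using cong_add_rcancel_0_nat[of "\<Sum>k<q. c k" "5 ^ (q div 2)" q] by (simp add: cong_0_iff)
  have "[2 ^ (q - 1) = 1] (mod q)"
    using fermat_theorem[OF \<open>prime q\<close>, of 2] assms primes_dvd_imp_eq[OF \<open>prime q\<close> two_is_prime_nat]
    by blast
  then have "[2 ^ q = 2] (mod q)"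
    using cong_scalar_left[of "2 ^ (q - 1)" 1 q 2] prime_gt_0_nat[OF \<open>prime q\<close>]
    by (simp add: power_Suc[symmetric])
  then have "[2 * fib q = 2 ^ q * fib q] (mod q)"
    by (simp add: cong_scalar_right cong_sym)
  also have "2 ^ q * fib q = 2 * (\<Sum>k\<le>q. c k)"
    unfolding c_def by (rule fib_binomial_expansion)
  also have "[2 * (\<Sum>k\<le>q. c k) = 2 * 5 ^ (q div 2)] (mod q)"
    using sum_cong by (rule cong_scalar_left)
  finally have "[2 * fib q = 2 * 5 ^ (q div 2)] (mod q)" .
  moreover have "coprime 2 q" using \<open>odd q\<close> by simp
  ultimately show ?thesis using cong_mult_lcancel_nat by blast
qed

lemma prime_dvd_fib_pred_or_fib_Suc:
  assumes "prime q" "q \<noteq> 2" "q \<noteq> 5"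
  shows "q dvd fib (q - 1) \<or> q dvd fib (Suc q)"
proof -
  have "odd q" "q > 2"
    using prime_odd_nat[OF assms(1)] prime_ge_2_nat[OF assms(1)] assms(2) by simp_all
  have "\<not> q dvd 5"
    using primes_dvd_imp_eq[OF assms(1), of 5] assms(3) by auto
  then have "[5 ^ (q - 1) = 1] (mod q)"
    using fermat_theorem[OF assms(1)] by blast
  moreover have "(5::nat) ^ (q - 1) = (5 ^ (q div 2)) ^ 2"
    using \<open>odd q\<close> by (simp add: power_mult[symmetric] mult.commute)
  ultimately have "[fib q ^ 2 = 1] (mod q)"
    using cong_pow[OF cong_fib_prime[OF assms(1,2)], of 2] cong_trans by metis
  then have "q dvd fib q ^ 2 - 1"
    using fib_neq_0_nat[of q] \<open>q > 2\<close> by (simp add: cong_altdef_nat)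
  also have "fib q ^ 2 - 1 = fib (Suc q) * fib (q - 1)"
    using fib_Cassini_nat[of "q - 1"] \<open>odd q\<close> \<open>q > 2\<close> by (simp add: Suc_diff_1)
  finally show ?thesis
    using prime_dvd_mult_iff[OF assms(1)] by blast
qed

lemma zfib_least:
  assumes "q dvd fib n" "n > 0"
  shows zfib_pos: "0 < zfib q" and dvd_fib_zfib: "q dvd fib (zfib q)"
    and zfib_dvd: "zfib q dvd n"
proof -
  have zfib_P: "0 < zfib q \<and> q dvd fib (zfib q)"
    unfolding zfib_def by (rule LeastI[of _ n]) (use assms in simp)
  then show "0 < zfib q" "q dvd fib (zfib q)" by simp_all
  define g where "g = gcd (zfib q) n"
  have "q dvd fib g"
    using zfib_P assms(1) by (simp add: g_def fib_gcd)
  moreover have "g > 0" using assms(2) by (simp add: g_def)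
  ultimately have "zfib q \<le> g"
    unfolding zfib_def by (intro Least_le) simp
  moreover have "g \<le> zfib q"
    using zfib_P by (simp add: g_def dvd_imp_le)
  ultimately show "zfib q dvd n"
    by (metis g_def gcd_dvd2 order_antisym)
qed

lemma zfib_prime:
  assumes "prime q" "q \<noteq> 2" "q \<noteq> 5"
  shows "0 < zfib q" "q dvd fib (zfib q)" "coprime q (zfib q)"
proof -
  obtain n where n: "q dvd fib n" "n = q - 1 \<or> n = Suc q"
    using prime_dvd_fib_pred_or_fib_Suc[OF assms] by blast
  have "q > 2" using prime_ge_2_nat[OF assms(1)] assms(2) by simp
  then have "n > 0" using n(2) by auto
  show "0 < zfib q" "q dvd fib (zfib q)"
    using zfib_least[OF n(1) \<open>n > 0\<close>] by simp_all
  have "\<not> q dvd n"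
  proof
    assume "q dvd n"
    from n(2) show False
    proof
      assume "n = q - 1"
      then show False using \<open>q dvd n\<close> \<open>n > 0\<close> dvd_imp_le[of q n] by linarith
    next
      assume "n = Suc q"
      then have "q dvd q + 1" using \<open>q dvd n\<close> by simp
      then have "q dvd 1" using dvd_add_right_iff[of q q 1] by simp
      then show False using \<open>q > 2\<close> by simp
    qed
  qed
  then have "\<not> q dvd zfib q"
    using zfib_dvd[OF n(1) \<open>n > 0\<close>] dvd_trans by blast
  then show "coprime q (zfib q)"
    using prime_imp_coprime[OF assms(1)] by blast
qed

lemma totient_ellfib_prime:
  assumes "prime q" "q \<noteq> 2" "q \<noteq> 5"
  shows "totient (ellfib q) = (q - 1) * totient (zfib q)"
  using zfib_prime(3)[OF assms]
  by (simp add: ellfib_def lcm_coprime totient_mult_coprime totient_prime[OF assms(1)])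

lemma prod_prime_factors_le:
  assumes "n > (0::nat)"
  shows "(\<Prod>p\<in>prime_factors n. p) \<le> n"
proof -
  have "(\<Prod>p\<in>prime_factors n. p) \<le> (\<Prod>p\<in>prime_factors n. p ^ multiplicity p n)"
    by (intro prod_mono) (auto simp: prime_factors_multiplicity intro!: self_le_power prime_ge_1_nat)
  also have "\<dots> = n" using prime_factorization_nat[OF assms] by simp
  finally show ?thesis .
qed

lemma two_pow_card_prime_factors_le:
  assumes "n > (0::nat)"
  shows "2 ^ card (prime_factors n) \<le> n"
proof -
  have "(2::nat) ^ card (prime_factors n) = (\<Prod>p\<in>prime_factors n. 2)" by simp
  also have "\<dots> \<le> (\<Prod>p\<in>prime_factors n. p)"
    by (intro prod_mono) (auto intro: prime_ge_2_nat)
  also have "\<dots> \<le> n" by (rule prod_prime_factors_le[OF assms])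
  finally show ?thesis .
qed

lemma fib_le_two_pow: "fib n \<le> 2 ^ n"
  by (induction n rule: fib.induct) auto

lemma card_prime_factors_fib_le: "card (prime_factors (fib n)) \<le> n"
proof (cases "n = 0")
  case False
  then have "2 ^ card (prime_factors (fib n)) \<le> (2::nat) ^ n"
    using two_pow_card_prime_factors_le[OF fib_neq_0_nat] fib_le_two_pow order_trans by blast
  then show ?thesis by simp
qed simp

lemma cbrt_factor_ge_half:
  fixes x :: real
  assumes "x \<ge> 2"
  shows "(1 - 1 / x) * x powr (1/3) \<ge> 1/2"
proof -
  have "(1/2) * 1 \<le> (1 - 1 / x) * x powr (1/3)"
    using assms by (intro mult_mono) (auto simp: field_simps ge_one_powr_ge_zero)
  then show ?thesis by simp
qed

lemma cbrt_factor_ge_one: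
  fixes x :: real
  assumes "x \<ge> 4"
  shows "(1 - 1 / x) * x powr (1/3) \<ge> 1"
proof -
  have "(x powr (1/3)) ^ 3 = x"
    using powr_power[of x "1/3" 3] assms by simp
  then have "(4/3) ^ 3 \<le> (x powr (1/3)) ^ 3"
    using assms by (simp add: power_divide)
  then have "4/3 \<le> x powr (1/3)"
    by (subst (asm) power_mono_iff) simp_all
  then have "(3/4) * (4/3) \<le> (1 - 1 / x) * x powr (1/3)"
    using assms by (intro mult_mono) (auto simp: field_simps)
  then show ?thesis by simp
qed

lemma prod_primes_cbrt_factor_ge:
  assumes "finite P" "\<And>p. p \<in> P \<Longrightarrow> prime p"
  shows "(\<Prod>p\<in>P. (1 - 1 / real p) * real p powr (1/3)) \<ge> 1/4"
proof -
  define g where "g p = (1 - 1 / real p) * real p powr (1/3)" for p :: nat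
  define A where "A = P \<inter> {2, 3}"
  have "card A \<le> card {2::nat, 3}"
    by (intro card_mono) (auto simp: A_def)
  then have "(1/2) ^ 2 \<le> (1/2::real) ^ card A"
    by (intro power_decreasing) auto
  also have "\<dots> = (\<Prod>p\<in>A. 1/2)" by simp
  also have "\<dots> \<le> (\<Prod>p\<in>A. g p)"
  proof (intro prod_mono conjI)
    fix p assume "p \<in> A"
    then have "real p \<ge> 2" using assms(2) prime_ge_2_nat by (auto simp: A_def)
    then show "1/2 \<le> g p" unfolding g_def by (rule cbrt_factor_ge_half)
  qed simp
  finally have small: "1/4 \<le> (\<Prod>p\<in>A. g p)" by (simp add: power2_eq_square)
  have "1 \<le> (\<Prod>p\<in>P - A. g p)"
  proof (intro prod_ge_1)
    fix p assume p: "p \<in> P - A"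
    then have "prime p" "p \<noteq> 2" "p \<noteq> 3" using assms(2) by (auto simp: A_def)
    moreover have "\<not> prime (4::nat)"
      using prime_product[of "2::nat" 2] by simp
    ultimately have "p \<ge> 4"
      using prime_ge_2_nat[of p] by (cases "p = 4") auto
    then show "1 \<le> g p" unfolding g_def by (intro cbrt_factor_ge_one) simp
  qed
  then have "1/4 * 1 \<le> (\<Prod>p\<in>A. g p) * (\<Prod>p\<in>P - A. g p)"
    using small by (intro mult_mono) auto
  also have "\<dots> = (\<Prod>p\<in>P. g p)"
    using assms(1) by (simp add: A_def prod.subset_diff[of "P \<inter> {2, 3}" P])
  finally show ?thesis by (simp add: g_def)
qed

lemma totient_ge_powr_two_thirds: "real m powr (2/3) / 4 \<le> real (totient m)"
proof (cases "m = 0")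
  case False
  define P where "P = prime_factors m"
  define E where "E = (\<Prod>p\<in>P. 1 - 1 / real p)"
  have "E \<ge> 0" unfolding E_def by (intro prod_nonneg) (auto simp: divide_le_eq)
  have "1/4 \<le> (\<Prod>p\<in>P. (1 - 1 / real p) * real p powr (1/3))"
    unfolding P_def by (intro prod_primes_cbrt_factor_ge) auto
  also have "\<dots> = E * real (\<Prod>p\<in>P. p) powr (1/3)"
    by (simp add: E_def prod.distrib prod_powr_distrib)
  also have "\<dots> \<le> E * real m powr (1/3)"
  proof -
    have "real (\<Prod>p\<in>P. p) \<le> real m"
      using prod_prime_factors_le[of m] False unfolding P_def of_nat_le_iff by simp
    then show ?thesis
      by (rule mult_left_mono[OF powr_mono2 \<open>E \<ge> 0\<close>, rotated 2]) (simp_all add: prod_nonneg)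
  qed
  finally have "real m powr (2/3) * (1/4) \<le> real m powr (2/3) * (E * real m powr (1/3))"
    by (intro mult_left_mono) auto
  also have "\<dots> = real m * E"
    using False by (simp add: powr_add[symmetric] algebra_simps)
  also have "\<dots> = real (totient m)"
    by (simp add: E_def P_def totient_formula2)
  finally show ?thesis by simp
qed simp

lemma finite_card_zfib_fibre:
  "finite {q. prime q \<and> q \<noteq> 2 \<and> q \<noteq> 5 \<and> zfib q = m}"
  "card {q. prime q \<and> q \<noteq> 2 \<and> q \<noteq> 5 \<and> zfib q = m} \<le> m"
proof -
  have sub: "{q. prime q \<and> q \<noteq> 2 \<and> q \<noteq> 5 \<and> zfib q = m} \<subseteq> prime_factors (fib m)"
    using zfib_prime fib_neq_0_nat by (auto simp: prime_factors_dvd)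
  then show "finite {q. prime q \<and> q \<noteq> 2 \<and> q \<noteq> 5 \<and> zfib q = m}"
    by (rule finite_subset) simp
  show "card {q. prime q \<and> q \<noteq> 2 \<and> q \<noteq> 5 \<and> zfib q = m} \<le> m"
    using card_mono[OF _ sub] card_prime_factors_fib_le order_trans by blast
qed

lemma summable_on_powr_bounded_fibres:
  fixes g :: "'a \<Rightarrow> nat" and s :: real
  assumes "s > 2" and fin: "\<And>m. finite {x\<in>A. g x = m}"
    and card: "\<And>m. card {x\<in>A. g x = m} \<le> m"
  shows "(\<lambda>x. real (g x) powr (-s)) summable_on A"
proof (rule nonneg_bdd_above_summable_on)
  have summable: "summable (\<lambda>n. real n powr (1 - s))"
    using \<open>s > 2\<close> by (simp add: summable_real_powr_iff)
  show "bdd_above (sum (\<lambda>x. real (g x) powr (-s)) ` {F. F \<subseteq> A \<and> finite F})"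
  proof (rule bdd_aboveI2)
    fix F assume F: "F \<in> {F. F \<subseteq> A \<and> finite F}"
    have "(\<Sum>x\<in>F. real (g x) powr (-s))
        = (\<Sum>m\<in>g ` F. \<Sum>x\<in>{x\<in>F. g x = m}. real (g x) powr (-s))"
      using F by (intro sum.image_gen) simp
    also have "\<dots> = (\<Sum>m\<in>g ` F. real (card {x\<in>F. g x = m}) * real m powr (-s))"
      by (intro sum.cong refl) simp
    also have "\<dots> \<le> (\<Sum>m\<in>g ` F. real m * real m powr (-s))"
    proof (intro sum_mono mult_right_mono)
      fix m
      have "card {x\<in>F. g x = m} \<le> card {x\<in>A. g x = m}"
        using F fin by (intro card_mono) auto
      then show "real (card {x\<in>F. g x = m}) \<le> real m"
        using card[of m] by linarith
    qed simp
    also have "\<dots> = (\<Sum>m\<in>g ` F. real m powr (1 - s))"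
      by (intro sum.cong refl) (simp add: powr_mult_base)
    also have "\<dots> \<le> (\<Sum>n. real n powr (1 - s))"
      using F by (intro sum_le_suminf[OF summable]) auto
    finally show "(\<Sum>x\<in>F. real (g x) powr (-s)) \<le> (\<Sum>n. real n powr (1 - s))" .
  qed
qed simp

lemma powr_mult_powr_le_add:
  fixes a z :: real
  assumes "a > 0" "z > 0"
  shows "a powr (-3/4) * z powr (-2/3) \<le> a powr (-13/12) + z powr (-13/6)"
proof -
  have square_powr: "(x\<^sup>2) powr c = x powr (2 * c)" if "x > 0" for x c :: real
    using that by (simp add: powr_powr[symmetric])
  consider "a < z\<^sup>2" | "z\<^sup>2 \<le> a" by linarith
  then show ?thesis
  proof cases
    case 1
    have "z powr (-2/3) = (z\<^sup>2) powr (-1/3)"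
      using square_powr[of z "-1/3"] assms by simp
    also have "\<dots> \<le> a powr (-1/3)"
      using 1 assms by (intro powr_mono2') auto
    finally have "a powr (-3/4) * z powr (-2/3) \<le> a powr (-3/4) * a powr (-1/3)"
      by (intro mult_left_mono) auto
    also have "\<dots> = a powr (-13/12)" by (simp add: powr_add[symmetric])
    finally show ?thesis using powr_ge_zero[of z "-13/6"] by linarith
  next
    case 2
    have "a powr (-3/4) \<le> (z\<^sup>2) powr (-3/4)"
      using 2 assms by (intro powr_mono2') auto
    also have "\<dots> = z powr (-3/2)"
      using square_powr[of z "-3/4"] assms by simp
    finally have "a powr (-3/4) * z powr (-2/3) \<le> z powr (-3/2) * z powr (-2/3)"
      by (intro mult_right_mono) auto
    also have "\<dots> = z powr (-13/6)" by (simp add: powr_add[symmetric])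
    finally show ?thesis using powr_ge_zero[of a "-13/12"] by linarith
  qed
qed

lemma weighted_inverse_totient_ellfib_le:
  assumes "prime q" "q \<noteq> 2" "q \<noteq> 5"
  shows "real q powr (1/4) / real (totient (ellfib q))
           \<le> 8 * (real q powr (-13/12) + real (zfib q) powr (-13/6))"
proof -
  define a z where "a = real q" and "z = real (zfib q)"
  have "a \<ge> 2" using prime_ge_2_nat[OF assms(1)] by (simp add: a_def)
  have "z > 0" using zfib_prime(1)[OF assms] by (simp add: z_def)
  have "(a / 2) * (z powr (2/3) / 4) \<le> (a - 1) * real (totient (zfib q))"
    using \<open>a \<ge> 2\<close> totient_ge_powr_two_thirds[of "zfib q"] by (intro mult_mono) (auto simp: z_def)
  also have "\<dots> = real (totient (ellfib q))"
    using totient_ellfib_prime[OF assms] prime_ge_2_nat[OF assms(1)] by (simp add: a_def of_nat_diff)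
  finally have lower: "a * z powr (2/3) / 8 \<le> real (totient (ellfib q))" by simp
  have "real q powr (1/4) / real (totient (ellfib q)) \<le> a powr (1/4) / (a * z powr (2/3) / 8)"
    unfolding a_def[symmetric]
    by (rule frac_le[OF _ order_refl _ lower]) (use \<open>a \<ge> 2\<close> \<open>z > 0\<close> in simp_all)
  also have "\<dots> = 8 * (a powr (-3/4) * z powr (-2/3))"
    using \<open>a \<ge> 2\<close> \<open>z > 0\<close> by (simp add: powr_minus_divide field_simps powr_add[symmetric])
  also have "\<dots> \<le> 8 * (a powr (-13/12) + z powr (-13/6))"
    using \<open>a \<ge> 2\<close> \<open>z > 0\<close> powr_mult_powr_le_add[of a z] by simp
  finally show ?thesis by (simp add: a_def z_def)
qed

lemma summable_on_weighted_inverse_totient_ellfib: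
  "(\<lambda>q. real q powr (1/4) / real (totient (ellfib q))) summable_on {q. prime q}"
proof -
  define P where "P = {q::nat. prime q \<and> q \<noteq> 2 \<and> q \<noteq> 5}"
  have "(\<lambda>q. real q powr (-13/12)) summable_on UNIV"
    by (simp add: summable_on_UNIV_nonneg_real_iff summable_real_powr_iff)
  then have "(\<lambda>q. real q powr (-13/12)) summable_on P"
    by (rule summable_on_subset) simp
  moreover have "(\<lambda>q. real (zfib q) powr (-(13/6))) summable_on P"
    unfolding P_def
    by (rule summable_on_powr_bounded_fibres) (simp_all add: conj_assoc finite_card_zfib_fibre)
  ultimately have "(\<lambda>q. 8 * (real q powr (-13/12) + real (zfib q) powr (-13/6))) summable_on P"
    by (intro summable_on_cmult_right summable_on_add) simp_all
  then have "(\<lambda>q. real q powr (1/4) / real (totient (ellfib q))) summable_on P"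
  proof (rule summable_on_comparison_test)
    fix q assume "q \<in> P"
    then show "real q powr (1/4) / real (totient (ellfib q))
                 \<le> 8 * (real q powr (-13/12) + real (zfib q) powr (-13/6))"
      unfolding P_def by (intro weighted_inverse_totient_ellfib_le) simp_all
  qed simp
  then have "(\<lambda>q. real q powr (1/4) / real (totient (ellfib q))) summable_on P \<union> {2, 5}"
    by (intro summable_on_union) simp_all
  then show ?thesis
    by (rule summable_on_subset) (auto simp: P_def)
qed

lemma tail_infsum_le_weighted:
  fixes f :: "nat \<Rightarrow> real"
  assumes summable: "(\<lambda>q. real q powr a * f q) summable_on A"
    and nonneg: "\<And>q. q \<in> A \<Longrightarrow> 0 \<le> f q" and "a \<ge> 0" "y > 0"
  shows "f summable_on {q\<in>A. y < real q}"
    and "(\<Sum>\<^sub>\<infinity>q\<in>{q\<in>A. y < real q}. f q) \<le> (\<Sum>\<^sub>\<infinity>q\<in>A. real q powr a * f q) / y powr a"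
proof -
  define T where "T = {q\<in>A. y < real q}"
  define c where "c = 1 / y powr a"
  have "T \<subseteq> A" by (auto simp: T_def)
  have le: "f q \<le> c * (real q powr a * f q)" if "q \<in> T" for q
  proof -
    have "y powr a * f q \<le> real q powr a * f q"
      using that \<open>a \<ge> 0\<close> \<open>y > 0\<close> nonneg by (intro mult_right_mono powr_mono2) (auto simp: T_def)
    then show ?thesis using \<open>y > 0\<close> by (simp add: c_def field_simps)
  qed
  have summable_T: "(\<lambda>q. c * (real q powr a * f q)) summable_on T"
    by (intro summable_on_cmult_right summable_on_subset[OF summable \<open>T \<subseteq> A\<close>])
  show "f summable_on {q\<in>A. y < real q}"
    unfolding T_def[symmetric]
    by (rule summable_on_comparison_test[OF summable_T le]) (use nonneg T_def in auto)
  then have "(\<Sum>\<^sub>\<infinity>q\<in>T. f q) \<le> (\<Sum>\<^sub>\<infinity>q\<in>T. c * (real q powr a * f q))"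
    by (intro infsum_mono[OF _ summable_T le]) (simp add: T_def)
  also have "\<dots> = c * (\<Sum>\<^sub>\<infinity>q\<in>T. real q powr a * f q)"
    by (intro infsum_cmult_right summable_on_subset[OF summable \<open>T \<subseteq> A\<close>])
  also have "\<dots> \<le> c * (\<Sum>\<^sub>\<infinity>q\<in>A. real q powr a * f q)"
    using nonneg \<open>T \<subseteq> A\<close> \<open>y > 0\<close>
    by (intro mult_left_mono infsum_mono_neutral summable_on_subset[OF summable \<open>T \<subseteq> A\<close>] summable)
       (auto simp: c_def)
  finally show "(\<Sum>\<^sub>\<infinity>q\<in>{q\<in>A. y < real q}. f q) \<le> (\<Sum>\<^sub>\<infinity>q\<in>A. real q powr a * f q) / y powr a"
    by (simp add: T_def c_def)
qed

theorem lemma2p4: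
  shows "\<exists>C::real. C > 0 \<and> (\<forall>y::real. y > 0 \<longrightarrow>
     (\<lambda>q. 1 / real (totient (ellfib q))) summable_on {q::nat. prime q \<and> real q > y} \<and>
     (\<Sum>\<^sub>\<infinity>q\<in>{q::nat. prime q \<and> real q > y}. 1 / real (totient (ellfib q))) \<le> C / y powr (1/4))"
proof -
  define w where "w q = real q powr (1/4) * (1 / real (totient (ellfib q)))" for q :: nat
  define S where "S = (\<Sum>\<^sub>\<infinity>q\<in>{q. prime q}. w q)"
  have summable: "w summable_on {q. prime q}"
    using summable_on_weighted_inverse_totient_ellfib unfolding w_def by simp
  have "S \<ge> 0" unfolding S_def w_def by (intro infsum_nonneg) simp
  have tail: "{q. prime q \<and> real q > y} = {q\<in>{q. prime q}. y < real q}" for y :: real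
    by auto
  show ?thesis
  proof (intro exI[of _ "S + 1"] conjI allI impI)
    fix y :: real assume "y > 0"
    note tail_bound = tail_infsum_le_weighted[OF summable[unfolded w_def] _ _ \<open>y > 0\<close>, unfolded tail[symmetric]]
    show "(\<lambda>q. 1 / real (totient (ellfib q))) summable_on {q. prime q \<and> real q > y}"
      by (rule tail_bound(1)) simp_all
    have "(\<Sum>\<^sub>\<infinity>q\<in>{q. prime q \<and> real q > y}. 1 / real (totient (ellfib q))) \<le> S / y powr (1/4)"
      unfolding S_def w_def by (rule tail_bound(2)) simp_all
    also have "\<dots> \<le> (S + 1) / y powr (1/4)"
      using \<open>y > 0\<close> by (intro divide_right_mono) simp_all
    finally show "(\<Sum>\<^sub>\<infinity>q\<in>{q. prime q \<and> real q > y}. 1 / real (totient (ellfib q))) \<le> (S + 1) / y powr (1/4)" .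
  qed (use \<open>S \<ge> 0\<close> in simp)
qed

end
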